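(* Let $0<p_0<p_1\le\infty$ and $0<q_0<q_1\le\infty$. Then for all $n\ge1$ $$b_n\big(\ell^{q_0}(\ell^{p_0})\hookrightarrow\ell^{q_1}(\ell^{p_1})\big)\le n^{-\min\left(\frac1{p_0},\frac1{q_0}\right)\left(1-\max\left(\frac{q_0}{q_1},\frac{p_0}{p_1}\right)\right)}.$$ In particular, the embedding $\ell^{q_0}(\ell^{p_0})\hookrightarrow\ell^{q_1}(\ell^{p_1})$ is finitely strictly singular.
   Context: For quasi-normed spaces $X_j$ and $q\in(0,\infty]$, $\ell^q(X_j)_{j=0}^\infty$ is the space of sequences $x=(x_j)_{j\ge0}$, $x_j\in X_j$, with $\|x\|=(\sum_j\|x_j\|_{X_j}^q)^{1/q}<\infty$ (supremum if $q=\infty$); $\ell^q(\ell^p)$ is the case $X_j=\ell^p=\ell^p(\mathbb{N})$ for all $j$. Bernstein numbers of a bounded linear $T:X\to Y$ between quasi-Banach spaces: $b_n(T)=\sup\{\inf_{x\in X_n,\|x\|_X=1}\|Tx\|_Y:X_n\subseteq X,\ \dim X_n=n\}$; $T$ is finitely strictly singular if $b_n(T)\to0$. *)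

theory Defs
  imports "HOL-Analysis.Analysis" "HOL-Library.Function_Algebras"
begin

text \<open>Scalar field: real. Sequences in ell^p are functions nat to real,
 elements of ell^q(ell^p) are functions nat to (nat to real), x j being the j-th block.\<close>

definition in_lp :: "ereal \<Rightarrow> (nat \<Rightarrow> real) \<Rightarrow> bool" where
  "in_lp p x = (if p = \<infinity> then bdd_above (range (\<lambda>i. \<bar>x i\<bar>))
                else summable (\<lambda>i. \<bar>x i\<bar> powr real_of_ereal p))"

definition lp_norm :: "ereal \<Rightarrow> (nat \<Rightarrow> real) \<Rightarrow> real" where
  "lp_norm p x = (if p = \<infinity> then (SUP i. \<bar>x i\<bar>)
                  else (\<Sum>i. \<bar>x i\<bar> powr real_of_ereal p) powr (1 / real_of_ereal p))"

definition in_mixed :: "ereal \<Rightarrow> ereal \<Rightarrow> (nat \<Rightarrow> nat \<Rightarrow> real) \<Rightarrow> bool" where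
  "in_mixed q p x = ((\<forall>j. in_lp p (x j)) \<and> in_lp q (\<lambda>j. lp_norm p (x j)))"

definition mixed_norm :: "ereal \<Rightarrow> ereal \<Rightarrow> (nat \<Rightarrow> nat \<Rightarrow> real) \<Rightarrow> real" where
  "mixed_norm q p x = lp_norm q (\<lambda>j. lp_norm p (x j))"

definition scl :: "real \<Rightarrow> (nat \<Rightarrow> nat \<Rightarrow> real) \<Rightarrow> (nat \<Rightarrow> nat \<Rightarrow> real)" where
  "scl c f = (\<lambda>j i. c * f j i)"

lemma vector_space_scl: "vector_space scl"
  by unfold_locales (auto simp: scl_def fun_eq_iff algebra_simps)

text \<open>Bernstein numbers of T : X \<rightarrow> Y, X given as a subset (a linear subspace) of the
 ambient vector space with quasi-norm nX, nY the quasi-norm of Y.\<close>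
definition bernstein :: "((nat \<Rightarrow> nat \<Rightarrow> real) \<Rightarrow> bool) \<Rightarrow> ((nat \<Rightarrow> nat \<Rightarrow> real) \<Rightarrow> real)
   \<Rightarrow> ((nat \<Rightarrow> nat \<Rightarrow> real) \<Rightarrow> real) \<Rightarrow> ((nat \<Rightarrow> nat \<Rightarrow> real) \<Rightarrow> (nat \<Rightarrow> nat \<Rightarrow> real))
   \<Rightarrow> nat \<Rightarrow> ereal" where
  "bernstein X nX nY T n =
     (SUP V \<in> {V. module.subspace scl V \<and> V \<subseteq> Collect X \<and> vector_space.dim scl V = n}.
        (INF x \<in> {x \<in> V. nX x = 1}. ereal (nY (T x))))"

end

theory Submission
  imports Defs
begin

text \<open>
  Let \<open>V\<close> be an \<open>n\<close>-dimensional subspace of \<open>\<ell>\<^sup>q\<^sup>0(\<ell>\<^sup>p\<^sup>0)\<close> and index the entries of its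
  elements by pairs \<open>k = (j, i)\<close>. Since these entries tend to zero, \<open>V\<close> contains a vector \<open>x\<close> with
  all entries of modulus at most \<open>1\<close> and \<open>n\<close> entries of modulus exactly \<open>1\<close>: if fewer are pinned,
  some nonzero \<open>y \<in> V\<close> vanishes on the pinned entries, and along \<open>x + e y\<close> one stops at the first
  \<open>e \<ge> 0\<close> where a further entry reaches modulus \<open>1\<close>. Counting these entries block by block gives
  \<open>\<parallel>x\<parallel> \<ge> n\<^bsup>\<mu>\<^esup>\<close> with \<open>\<mu> = min(1/p\<^sub>0, 1/q\<^sub>0)\<close>, so \<open>z = x / \<parallel>x\<parallel>\<close> is a unit vector of \<open>V\<close> whose
  entries are at most \<open>n\<^bsup>-\<mu>\<^esup>\<close>. Interpolating between \<open>\<ell>\<^sup>p\<^sup>0\<close> and \<open>\<ell>\<^sup>\<infinity>\<close> in the inner and then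
  in the outer index gives \<open>\<parallel>z\<parallel>\<^sub>q\<^sub>1\<^sub>,\<^sub>p\<^sub>1 \<le> (sup\<^sub>k \<bar>z\<^sub>k\<bar>)\<^bsup>1-\<theta>\<^esup>\<close> with
  \<open>\<theta> = max(q\<^sub>0/q\<^sub>1, p\<^sub>0/p\<^sub>1)\<close>, which is the bound \<open>n\<^bsup>-\<mu>(1-\<theta>)\<^esup>\<close>.
\<close>

lemma suminf_ge_term:
  fixes f :: "nat \<Rightarrow> real"
  assumes "summable f" "\<And>i. 0 \<le> f i"
  shows "f i \<le> suminf f"
  using sum_le_suminf[OF assms(1), of "{i}"] assms(2) by auto

lemma lp_norm_real: "lp_norm (ereal p) u = (\<Sum>i. \<bar>u i\<bar> powr p) powr (1 / p)"
  by (simp add: lp_norm_def)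

lemma lp_norm_real_nonneg: "0 \<le> lp_norm (ereal p) u"
  by (simp add: lp_norm_real)

lemma lp_norm_real_powr:
  assumes "0 < p" "summable (\<lambda>i. \<bar>u i\<bar> powr p)"
  shows "lp_norm (ereal p) u powr p = (\<Sum>i. \<bar>u i\<bar> powr p)"
  using assms suminf_nonneg[OF assms(2)] by (simp add: lp_norm_real powr_powr)

lemma abs_le_lp_norm:
  assumes p: "0 < p" and s: "summable (\<lambda>i. \<bar>u i\<bar> powr p)"
  shows "\<bar>u i\<bar> \<le> lp_norm (ereal p) u"
proof -
  have "\<bar>u i\<bar> powr p \<le> (\<Sum>i. \<bar>u i\<bar> powr p)"
    by (rule suminf_ge_term[OF s]) simp
  then have "(\<bar>u i\<bar> powr p) powr (1/p) \<le> (\<Sum>i. \<bar>u i\<bar> powr p) powr (1/p)"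
    by (intro powr_mono2) (use p in auto)
  then show ?thesis
    using p by (simp add: lp_norm_real powr_powr)
qed

lemma lp_norm_cmult:
  assumes p: "0 < p" and s: "summable (\<lambda>i. \<bar>u i\<bar> powr p)"
  shows "lp_norm (ereal p) (\<lambda>i. c * u i) = \<bar>c\<bar> * lp_norm (ereal p) u"
proof -
  have "(\<Sum>i. \<bar>c * u i\<bar> powr p) = (\<Sum>i. \<bar>c\<bar> powr p * \<bar>u i\<bar> powr p)"
    by (simp add: abs_mult powr_mult)
  also have "\<dots> = \<bar>c\<bar> powr p * (\<Sum>i. \<bar>u i\<bar> powr p)"
    by (rule suminf_mult[OF s])
  finally have "lp_norm (ereal p) (\<lambda>i. c * u i) = (\<bar>c\<bar> powr p * (\<Sum>i. \<bar>u i\<bar> powr p)) powr (1/p)"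
    by (simp add: lp_norm_real)
  also have "\<dots> = (\<bar>c\<bar> powr p) powr (1/p) * lp_norm (ereal p) u"
    using suminf_nonneg[OF s] by (simp add: powr_mult lp_norm_real)
  finally show ?thesis
    using p by (simp add: powr_powr)
qed

lemma card_powr_le_lp_norm:
  assumes p: "0 < p" and s: "summable (\<lambda>i. \<bar>u i\<bar> powr p)" and I: "finite I"
    and ge1: "\<And>i. i \<in> I \<Longrightarrow> 1 \<le> \<bar>u i\<bar>"
  shows "real (card I) powr (1 / p) \<le> lp_norm (ereal p) u"
proof -
  have "real (card I) = (\<Sum>i\<in>I. 1)"
    by simp
  also have "\<dots> \<le> (\<Sum>i\<in>I. \<bar>u i\<bar> powr p)"
    using p by (intro sum_mono ge_one_powr_ge_zero ge1) auto
  also have "\<dots> \<le> (\<Sum>i. \<bar>u i\<bar> powr p)"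
    by (rule sum_le_suminf[OF s I]) simp
  finally show ?thesis
    unfolding lp_norm_real using p by (intro powr_mono2) auto
qed

lemma lp_norm_infinity_le:
  assumes "\<And>i. \<bar>u i\<bar> \<le> m"
  shows "0 \<le> lp_norm \<infinity> u" "lp_norm \<infinity> u \<le> m"
proof -
  have "bdd_above (range (\<lambda>i. \<bar>u i\<bar>))"
    using assms by (intro bdd_aboveI2)
  then have "\<bar>u 0\<bar> \<le> lp_norm \<infinity> u"
    using cSUP_upper[of 0 UNIV "\<lambda>i. \<bar>u i\<bar>"] by (simp add: lp_norm_def)
  then show "0 \<le> lp_norm \<infinity> u"
    by linarith
  show "lp_norm \<infinity> u \<le> m"
    by (simp add: lp_norm_def cSUP_least assms)
qed

lemma real_of_ereal_div_bounds:
  fixes p0 :: real and p1 :: ereal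
  assumes "0 < p0" "ereal p0 < p1"
  shows "0 \<le> real_of_ereal (ereal p0 / p1)" "real_of_ereal (ereal p0 / p1) < 1"
  using assms by (cases p1; simp)+

lemma powr_interpolation_mono:
  fixes m a M \<sigma> \<theta> :: real
  assumes "0 < m" "m \<le> a" "m \<le> M" "\<sigma> \<le> \<theta>" "\<theta> \<le> 1"
  shows "m powr (1 - \<sigma>) * a powr \<sigma> \<le> M powr (1 - \<theta>) * a powr \<theta>"
proof -
  have "m powr (1 - \<sigma>) * a powr \<sigma> = m powr (1 - \<theta>) * (m powr (\<theta> - \<sigma>) * a powr \<sigma>)"
    by (simp add: powr_add[symmetric])
  also have "\<dots> \<le> m powr (1 - \<theta>) * (a powr (\<theta> - \<sigma>) * a powr \<sigma>)"
    using assms by (intro mult_left_mono mult_right_mono powr_mono2) auto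
  also have "\<dots> = m powr (1 - \<theta>) * a powr \<theta>"
    by (simp add: powr_add[symmetric])
  also have "\<dots> \<le> M powr (1 - \<theta>) * a powr \<theta>"
    using assms by (intro mult_right_mono powr_mono2) auto
  finally show ?thesis .
qed

lemma lp_norm_real_le_interpolation:
  fixes u :: "nat \<Rightarrow> real"
  assumes p: "0 < p" "p < P" and s: "summable (\<lambda>i. \<bar>u i\<bar> powr p)"
    and m: "\<And>i. \<bar>u i\<bar> \<le> m"
  shows "lp_norm (ereal P) u \<le> m powr (1 - p / P) * lp_norm (ereal p) u powr (p / P)"
proof -
  define a where "a = lp_norm (ereal p) u"
  have dominated: "\<bar>u i\<bar> powr P \<le> m powr (P - p) * \<bar>u i\<bar> powr p" for i
  proof -
    have "\<bar>u i\<bar> powr P = \<bar>u i\<bar> powr (P - p) * \<bar>u i\<bar> powr p"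
      by (simp add: powr_add[symmetric])
    also have "\<dots> \<le> m powr (P - p) * \<bar>u i\<bar> powr p"
      using p m by (intro mult_right_mono powr_mono2) auto
    finally show ?thesis .
  qed
  have s': "summable (\<lambda>i. m powr (P - p) * \<bar>u i\<bar> powr p)"
    by (rule summable_mult[OF s])
  have sP: "summable (\<lambda>i. \<bar>u i\<bar> powr P)"
    by (rule summable_comparison_test[OF _ s']) (use dominated in auto)
  have "(\<Sum>i. \<bar>u i\<bar> powr P) \<le> (\<Sum>i. m powr (P - p) * \<bar>u i\<bar> powr p)"
    by (rule suminf_le[OF dominated sP s'])
  also have "\<dots> = m powr (P - p) * a powr p"
    using suminf_mult[OF s] lp_norm_real_powr[OF p(1) s] by (simp add: a_def)
  finally have "(\<Sum>i. \<bar>u i\<bar> powr P) powr (1/P) \<le> (m powr (P - p) * a powr p) powr (1/P)"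
    using p by (intro powr_mono2) (auto intro: suminf_nonneg[OF sP])
  also have "\<dots> = m powr ((P - p) / P) * a powr (p / P)"
    by (simp add: powr_mult powr_powr)
  also have "(P - p) / P = 1 - p / P"
    using p by (simp add: field_simps)
  finally show ?thesis
    by (simp add: lp_norm_real a_def)
qed

lemma lp_norm_le_interpolation:
  fixes u :: "nat \<Rightarrow> real" and p1 :: ereal
  assumes p: "0 < p0" "ereal p0 < p1" and s: "summable (\<lambda>i. \<bar>u i\<bar> powr p0)"
    and M: "\<And>i. \<bar>u i\<bar> \<le> M"
    and \<theta>: "real_of_ereal (ereal p0 / p1) \<le> \<theta>" "\<theta> \<le> 1"
  shows "0 \<le> lp_norm p1 u \<and> lp_norm p1 u \<le> M powr (1 - \<theta>) * lp_norm (ereal p0) u powr \<theta>"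
proof -
  define a where "a = lp_norm (ereal p0) u"
  define m where "m = min M a"
  define \<sigma> where "\<sigma> = real_of_ereal (ereal p0 / p1)"
  have um: "\<bar>u i\<bar> \<le> m" for i
    using M abs_le_lp_norm[OF p(1) s] by (simp add: m_def a_def)
  show ?thesis
  proof (cases "m = 0")
    case True
    then have "u = (\<lambda>_. 0)"
      using um by (simp add: fun_eq_iff)
    then show ?thesis
      by (simp add: lp_norm_def)
  next
    case False
    then have m: "0 < m"
      using um[of 0] by linarith
    have sharp: "0 \<le> lp_norm p1 u \<and> lp_norm p1 u \<le> m powr (1 - \<sigma>) * a powr \<sigma>"
    proof (cases p1)
      case PInf
      then show ?thesis
        using lp_norm_infinity_le[OF um] m by (simp add: \<sigma>_def m_def)
    next
      case (real P)
      then show ?thesis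
        using lp_norm_real_le_interpolation[OF p(1) _ s um] p lp_norm_real_nonneg
        by (simp add: \<sigma>_def a_def)
    qed (use p in simp)
    have "m powr (1 - \<sigma>) * a powr \<sigma> \<le> M powr (1 - \<theta>) * a powr \<theta>"
      using m \<theta> by (intro powr_interpolation_mono) (auto simp: m_def \<sigma>_def)
    with sharp show ?thesis
      by (simp add: a_def)
  qed
qed

lemma lp_norm_real_le_of_powr_le:
  fixes b w :: "nat \<Rightarrow> real"
  assumes Q: "0 < Q" and C: "0 \<le> C" and b: "\<And>j. 0 \<le> b j"
    and dominated: "\<And>j. b j powr Q \<le> C powr Q * w j"
    and w: "summable w" "(\<Sum>j. w j) \<le> 1"
  shows "lp_norm (ereal Q) b \<le> C"
proof -
  have s': "summable (\<lambda>j. C powr Q * w j)"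
    by (rule summable_mult[OF w(1)])
  have sb: "summable (\<lambda>j. b j powr Q)"
    by (rule summable_comparison_test[OF _ s']) (use dominated in auto)
  have "(\<Sum>j. b j powr Q) \<le> (\<Sum>j. C powr Q * w j)"
    by (rule suminf_le[OF dominated sb s'])
  also have "\<dots> = C powr Q * (\<Sum>j. w j)"
    by (rule suminf_mult[OF w(1)])
  also have "\<dots> \<le> C powr Q"
    using w(2) by (simp add: mult_left_le)
  finally have "(\<Sum>j. b j powr Q) powr (1/Q) \<le> (C powr Q) powr (1/Q)"
    using Q by (intro powr_mono2) (auto intro: suminf_nonneg[OF sb])
  then show ?thesis
    using Q C b by (simp add: lp_norm_real powr_powr)
qed

lemma le_one_of_suminf_powr_le_one:
  fixes a :: "nat \<Rightarrow> real"
  assumes "0 < q" "summable (\<lambda>j. a j powr q)" "(\<Sum>j. a j powr q) \<le> 1"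
  shows "a j \<le> 1"
proof (rule ccontr)
  assume "\<not> a j \<le> 1"
  then have "1 < a j powr q"
    using assms(1) by (simp add: powr_less_one)
  moreover have "a j powr q \<le> (\<Sum>j. a j powr q)"
    by (rule suminf_ge_term[OF assms(2)]) simp
  ultimately show False
    using assms(3) by linarith
qed

lemma lp_norm_le_of_dominated_by_powr:
  fixes b a :: "nat \<Rightarrow> real" and q1 :: ereal
  assumes q: "0 < q0" "ereal q0 < q1"
    and \<theta>: "real_of_ereal (ereal q0 / q1) \<le> \<theta>" "0 \<le> \<theta>" and C: "0 \<le> C"
    and b: "\<And>j. 0 \<le> b j" "\<And>j. b j \<le> C * a j powr \<theta>"
    and a: "\<And>j. 0 \<le> a j" "summable (\<lambda>j. a j powr q0)" "(\<Sum>j. a j powr q0) \<le> 1"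
  shows "0 \<le> lp_norm q1 b \<and> lp_norm q1 b \<le> C"
proof -
  have a_le1: "a j \<le> 1" for j
    using q(1) a(2,3) by (rule le_one_of_suminf_powr_le_one)
  show ?thesis
  proof (cases q1)
    case PInf
    have "b j \<le> C" for j
    proof -
      have "a j powr \<theta> \<le> 1"
        using \<theta>(2) a(1) a_le1 by (intro powr_le1) auto
      then show ?thesis
        using b(2)[of j] C mult_left_le[of "a j powr \<theta>" C] by linarith
    qed
    then show ?thesis
      using lp_norm_infinity_le[of b C] PInf b(1) by simp
  next
    case (real Q)
    with q have Q: "q0 < Q" "0 < Q"
      by auto
    have "q0 \<le> \<theta> * Q"
      using \<theta>(1) real Q by (simp add: field_simps)
    have "b j powr Q \<le> C powr Q * a j powr q0" for j
    proof -
      have "b j powr Q \<le> (C * a j powr \<theta>) powr Q"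
        by (intro powr_mono2) (use Q b in auto)
      also have "\<dots> = C powr Q * a j powr (\<theta> * Q)"
        by (simp add: powr_mult powr_powr)
      also have "\<dots> \<le> C powr Q * a j powr q0"
        by (intro mult_left_mono powr_mono') (use \<open>q0 \<le> \<theta> * Q\<close> a a_le1 in auto)
      finally show ?thesis .
    qed
    then have "lp_norm (ereal Q) b \<le> C"
      by (rule lp_norm_real_le_of_powr_le[OF Q(2) C b(1) _ a(2,3)])
    then show ?thesis
      using real lp_norm_real_nonneg by simp
  qed (use q in simp)
qed

lemma in_mixed_real_iff:
  "in_mixed (ereal q) (ereal p) x \<longleftrightarrow> (\<forall>j. summable (\<lambda>i. \<bar>x j i\<bar> powr p))
     \<and> summable (\<lambda>j. lp_norm (ereal p) (x j) powr q)"
  by (simp add: in_mixed_def in_lp_def lp_norm_real_nonneg)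

lemma mixed_norm_real:
  "mixed_norm (ereal q) (ereal p) x = (\<Sum>j. lp_norm (ereal p) (x j) powr q) powr (1/q)"
  by (simp add: mixed_norm_def lp_norm_real lp_norm_real_nonneg)

lemma mixed_norm_scl:
  assumes p: "0 < p" and q: "0 < q" and x: "in_mixed (ereal q) (ereal p) x"
  shows "mixed_norm (ereal q) (ereal p) (scl c x) = \<bar>c\<bar> * mixed_norm (ereal q) (ereal p) x"
proof -
  have "(\<lambda>j. lp_norm (ereal p) (scl c x j)) = (\<lambda>j. \<bar>c\<bar> * lp_norm (ereal p) (x j))"
    using x by (simp add: fun_eq_iff scl_def lp_norm_cmult[OF p] in_mixed_real_iff)
  then show ?thesis
    using x by (simp add: mixed_norm_def lp_norm_cmult[OF q] in_mixed_def in_lp_def)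
qed

lemma abs_le_mixed_norm:
  assumes p: "0 < p" and q: "0 < q" and x: "in_mixed (ereal q) (ereal p) x"
  shows "\<bar>x j i\<bar> \<le> mixed_norm (ereal q) (ereal p) x"
proof -
  have "\<bar>x j i\<bar> \<le> lp_norm (ereal p) (x j)"
    using x by (intro abs_le_lp_norm p) (simp add: in_mixed_real_iff)
  also have "\<dots> = \<bar>lp_norm (ereal p) (x j)\<bar>"
    by (simp add: lp_norm_real_nonneg)
  also have "\<dots> \<le> mixed_norm (ereal q) (ereal p) x"
    using x unfolding mixed_norm_def by (intro abs_le_lp_norm q) (simp add: in_mixed_def in_lp_def)
  finally show ?thesis .
qed

lemma finite_summable_level_set:
  fixes f :: "nat \<Rightarrow> real"
  assumes "summable f" "0 < d"
  shows "finite {n. d \<le> f n}"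
proof -
  obtain N where "\<And>n. n \<ge> N \<Longrightarrow> f n < d"
    using order_tendstoD(2)[OF summable_LIMSEQ_zero[OF assms(1)] assms(2)]
    by (auto simp: eventually_sequentially)
  then have "{n. d \<le> f n} \<subseteq> {..<N}"
    by (auto simp: not_less[symmetric])
  then show ?thesis
    by (rule finite_subset) simp
qed

lemma finite_mixed_level_set:
  assumes p: "0 < p" and q: "0 < q" and x: "in_mixed (ereal q) (ereal p) x" and d: "0 < d"
  shows "finite {k. d \<le> \<bar>x (fst k) (snd k)\<bar>}"
proof -
  have sj: "summable (\<lambda>i. \<bar>x j i\<bar> powr p)" for j
    using x by (simp add: in_mixed_real_iff)
  define J where "J = {j. d powr q \<le> lp_norm (ereal p) (x j) powr q}"
  define I where "I j = {i. d powr p \<le> \<bar>x j i\<bar> powr p}" for j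
  have "finite J"
    unfolding J_def using x d by (intro finite_summable_level_set) (simp_all add: in_mixed_real_iff)
  moreover have "finite (I j)" for j
    unfolding I_def using sj d by (intro finite_summable_level_set) simp_all
  moreover have "{k. d \<le> \<bar>x (fst k) (snd k)\<bar>} \<subseteq> Sigma J I"
  proof clarsimp
    fix j i assume h: "d \<le> \<bar>x j i\<bar>"
    then have "d \<le> lp_norm (ereal p) (x j)"
      using abs_le_lp_norm[OF p sj] order_trans by blast
    then show "j \<in> J \<and> i \<in> I j"
      using h d p q by (auto simp: J_def I_def intro: powr_mono2)
  qed
  ultimately show ?thesis
    by (meson finite_SigmaI finite_subset)
qed

lemma mixed_norm_le_interpolation:
  fixes p0 q0 M \<theta> :: real and p1 q1 :: ereal
  assumes p: "0 < p0" "ereal p0 < p1" and q: "0 < q0" "ereal q0 < q1"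
    and \<theta>: "real_of_ereal (ereal p0 / p1) \<le> \<theta>" "real_of_ereal (ereal q0 / q1) \<le> \<theta>" "\<theta> \<le> 1"
    and z: "in_mixed (ereal q0) (ereal p0) z" "mixed_norm (ereal q0) (ereal p0) z = 1"
    and M: "0 \<le> M" "\<And>j i. \<bar>z j i\<bar> \<le> M"
  shows "0 \<le> mixed_norm q1 p1 z \<and> mixed_norm q1 p1 z \<le> M powr (1 - \<theta>)"
proof -
  define a where "a j = lp_norm (ereal p0) (z j)" for j
  have sa: "summable (\<lambda>j. a j powr q0)"
    using z by (simp add: in_mixed_real_iff a_def)
  have "(\<Sum>j. a j powr q0) = mixed_norm (ereal q0) (ereal p0) z powr q0"
    using lp_norm_real_powr[OF q(1), of "\<lambda>j. \<bar>a j\<bar>"] sa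
    by (simp add: mixed_norm_def a_def lp_norm_real_nonneg)
  then have sum_a: "(\<Sum>j. a j powr q0) = 1"
    using z(2) by simp
  have "0 \<le> lp_norm p1 (z j) \<and> lp_norm p1 (z j) \<le> M powr (1 - \<theta>) * a j powr \<theta>" for j
    unfolding a_def using z(1) M(2) \<theta>(1,3)
    by (intro lp_norm_le_interpolation p) (simp_all add: in_mixed_real_iff)
  then show ?thesis
    unfolding mixed_norm_def
    using real_of_ereal_div_bounds[OF q] \<theta>(2) M(1) sa sum_a
    by (intro lp_norm_le_of_dominated_by_powr[OF q \<theta>(2)]) (auto simp: a_def lp_norm_real_nonneg)
qed

lemma powr_min_one_le_sum_powr:
  fixes c :: "'a \<Rightarrow> nat" and r :: real
  assumes J: "finite J" and r: "0 < r" and c: "\<And>j. j \<in> J \<Longrightarrow> 1 \<le> c j"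
    and n: "(\<Sum>j\<in>J. c j) = n" "1 \<le> n"
  shows "real n powr min 1 r \<le> (\<Sum>j\<in>J. real (c j) powr r)"
proof -
  define m where "m = min 1 r"
  have c_le_n: "c j \<le> n" if "j \<in> J" for j
    using member_le_sum[of j J c] J that n by simp
  text \<open>Each part contributes at least its share \<open>c\<^sub>j / n\<close> of \<open>n\<^sup>m\<close>.\<close>
  have share: "real (c j) * real n powr (m - 1) \<le> real (c j) powr r" if j: "j \<in> J" for j
  proof (cases "1 \<le> r")
    case True
    then have "real (c j) * real n powr (m - 1) = real (c j) powr 1"
      using c[OF j] n by (simp add: m_def)
    also have "\<dots> \<le> real (c j) powr r"
      using True c[OF j] by (intro powr_mono) auto
    finally show ?thesis .
  next
    case False
    have "real (c j) * real n powr (r - 1) \<le> real (c j) * real (c j) powr (r - 1)"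
      using False c[OF j] c_le_n[OF j] by (intro mult_left_mono powr_mono2') auto
    also have "\<dots> = real (c j) powr r"
      using c[OF j] by (simp add: powr_mult_base)
    finally show ?thesis
      using False by (simp add: m_def)
  qed
  have "real n powr m = real n * real n powr (m - 1)"
    using n by (simp add: powr_mult_base)
  also have "\<dots> = (\<Sum>j\<in>J. real (c j) * real n powr (m - 1))"
    by (simp add: sum_distrib_right[symmetric] n(1)[symmetric])
  also have "\<dots> \<le> (\<Sum>j\<in>J. real (c j) powr r)"
    by (rule sum_mono) (rule share)
  finally show ?thesis
    by (simp add: m_def)
qed

lemma mixed_norm_ge_card_powr:
  fixes p0 q0 :: real
  assumes p: "0 < p0" and q: "0 < q0" and x: "in_mixed (ereal q0) (ereal p0) x"
    and K: "finite K" "card K = n" "1 \<le> n"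
    and ge1: "\<And>k. k \<in> K \<Longrightarrow> 1 \<le> \<bar>x (fst k) (snd k)\<bar>"
  shows "real n powr min (1 / p0) (1 / q0) \<le> mixed_norm (ereal q0) (ereal p0) x"
proof -
  define J where "J = fst ` K"
  define I where "I j = {i. (j, i) \<in> K}" for j
  define a where "a j = lp_norm (ereal p0) (x j)" for j
  have "finite J"
    using K by (simp add: J_def)
  have fin_I: "finite (I j)" for j
    using K(1) by (rule finite_subset[rotated, OF finite_imageI[of _ snd]]) (force simp: I_def)
  have "K = Sigma J I"
    by (force simp: J_def I_def)
  then have card_I: "(\<Sum>j\<in>J. card (I j)) = n"
    using K \<open>finite J\<close> fin_I by simp
  have I_ne: "1 \<le> card (I j)" if "j \<in> J" for j
    using that fin_I[of j] by (force simp: J_def I_def Suc_le_eq card_gt_0_iff)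
  have sa: "summable (\<lambda>j. a j powr q0)"
    using x by (simp add: in_mixed_real_iff a_def)
  have card_le_a: "real (card (I j)) powr (q0 / p0) \<le> a j powr q0" for j
  proof -
    have "real (card (I j)) powr (1 / p0) \<le> a j"
      unfolding a_def using x p fin_I ge1
      by (intro card_powr_le_lp_norm) (auto simp: in_mixed_real_iff I_def)
    then have "(real (card (I j)) powr (1 / p0)) powr q0 \<le> a j powr q0"
      using q by (intro powr_mono2) auto
    then show ?thesis
      by (simp add: powr_powr)
  qed
  have "real n powr min 1 (q0 / p0) \<le> (\<Sum>j\<in>J. real (card (I j)) powr (q0 / p0))"
    using p q by (intro powr_min_one_le_sum_powr[OF \<open>finite J\<close> _ I_ne card_I K(3)]) auto
  also have "\<dots> \<le> (\<Sum>j\<in>J. a j powr q0)"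
    by (rule sum_mono) (rule card_le_a)
  also have "\<dots> \<le> (\<Sum>j. a j powr q0)"
    by (rule sum_le_suminf[OF sa \<open>finite J\<close>]) simp
  finally have "(real n powr min 1 (q0 / p0)) powr (1/q0) \<le> mixed_norm (ereal q0) (ereal p0) x"
    unfolding mixed_norm_real a_def using q by (intro powr_mono2) auto
  moreover have "min 1 (q0 / p0) * (1 / q0) = min (1 / p0) (1 / q0)"
    using p q by (auto simp: min_def field_simps)
  ultimately show ?thesis
    by (simp add: powr_powr)
qed

interpretation scl: vector_space scl
  by (rule vector_space_scl)

interpretation scl_pair: vector_space_pair scl scl ..

lemma sum_fun_apply: "(\<Sum>a\<in>A. f a) x = (\<Sum>a\<in>A. f a x)"
  by (induction A rule: infinite_finite_induct) auto

definition coord_restrict :: "(nat \<times> nat) set \<Rightarrow> (nat \<Rightarrow> nat \<Rightarrow> real) \<Rightarrow> (nat \<Rightarrow> nat \<Rightarrow> real)" where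
  "coord_restrict K y = (\<lambda>j i. if (j, i) \<in> K then y j i else 0)"

definition coord_unit :: "nat \<times> nat \<Rightarrow> (nat \<Rightarrow> nat \<Rightarrow> real)" where
  "coord_unit k = (\<lambda>j i. if (j, i) = k then 1 else 0)"

lemma coord_unit_apply: "coord_unit k' (fst k) (snd k) = (if k' = k then 1 else 0)"
  by (cases k) (auto simp: coord_unit_def)

lemma inj_coord_unit: "inj coord_unit"
proof (rule injI)
  fix a b
  assume "coord_unit a = coord_unit b"
  then have "coord_unit a (fst a) (snd a) = coord_unit b (fst a) (snd a)"
    by simp
  then show "a = b"
    by (simp add: coord_unit_apply split: if_splits)
qed

lemma coord_unit_independent: "scl.independent (coord_unit ` K)"
  unfolding scl.independent_explicit_module
proof (intro allI impI)
  fix t u v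
  assume t: "finite t" "t \<subseteq> coord_unit ` K" "(\<Sum>v\<in>t. scl (u v) v) = 0" "v \<in> t"
  then obtain k where k: "v = coord_unit k"
    by auto
  have unit_at_k: "w (fst k) (snd k) = (if w = v then 1 else 0)" if "w \<in> t" for w
    using that t(2) k inj_coord_unit by (auto simp: coord_unit_apply inj_eq)
  then have "(\<Sum>w\<in>t. scl (u w) w) (fst k) (snd k) = (\<Sum>w\<in>t. if v = w then u w else 0)"
    unfolding sum_fun_apply scl_def by (intro sum.cong) (auto simp: unit_at_k)
  then show "u v = 0"
    using t by simp
qed

lemma linear_coord_restrict: "Vector_Spaces.linear scl scl (coord_restrict K)"
  unfolding Vector_Spaces.linear_iff
  by (auto simp: vector_space_scl coord_restrict_def scl_def fun_eq_iff)

lemma coord_restrict_in_span: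
  assumes "finite K"
  shows "coord_restrict K y \<in> scl.span (coord_unit ` K)"
proof -
  have "coord_restrict K y j i = (\<Sum>k\<in>K. scl (y (fst k) (snd k)) (coord_unit k)) j i" for j i
  proof -
    have "(\<Sum>k\<in>K. scl (y (fst k) (snd k)) (coord_unit k)) j i
        = (\<Sum>k\<in>K. if k = (j, i) then y j i else 0)"
      by (auto simp: sum_fun_apply scl_def coord_unit_def intro: sum.cong)
    then show ?thesis
      using assms by (simp add: coord_restrict_def)
  qed
  then have "coord_restrict K y = (\<Sum>k\<in>K. scl (y (fst k) (snd k)) (coord_unit k))"
    by (simp add: fun_eq_iff)
  also have "\<dots> \<in> scl.span (coord_unit ` K)"
    by (intro scl.span_sum scl.span_scale scl.span_base) auto
  finally show ?thesis .
qed

text \<open>Restriction to fewer than \<open>dim V\<close> coordinates cannot be injective on \<open>V\<close>.\<close>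
lemma subspace_has_nonzero_vanishing_on:
  assumes V: "scl.subspace V" "scl.dim V = n" and K: "finite K" "card K < n"
  obtains y where "y \<in> V" "y \<noteq> 0" "\<And>k. k \<in> K \<Longrightarrow> y (fst k) (snd k) = 0"
proof -
  have "\<not> inj_on (coord_restrict K) V"
  proof
    assume inj: "inj_on (coord_restrict K) V"
    obtain B where B: "B \<subseteq> V" "scl.independent B" "V \<subseteq> scl.span B" "card B = scl.dim V"
      by (rule scl.basis_exists)
    have "scl.span B = V"
      by (rule scl.span_subspace[OF B(1) B(3) V(1)])
    then have "scl.independent (coord_restrict K ` B)"
      using inj by (intro scl_pair.linear_independent_injective_image[OF linear_coord_restrict B(2)]) simp
    moreover have "coord_restrict K ` B \<subseteq> scl.span (coord_unit ` K)"
      using coord_restrict_in_span[OF K(1)] by auto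
    ultimately have "card (coord_restrict K ` B) \<le> card (coord_unit ` K)"
      using scl.independent_span_bound[of "coord_unit ` K"] K(1) by simp
    moreover have "card (coord_restrict K ` B) = card B"
      by (rule card_image) (rule inj_on_subset[OF inj B(1)])
    moreover have "card (coord_unit ` K) \<le> card K"
      by (rule card_image_le[OF K(1)])
    ultimately show False
      using B(4) V(2) K(2) by simp
  qed
  then obtain y where y: "y \<in> V" "y \<noteq> 0" "coord_restrict K y = 0"
    using scl_pair.linear_inj_on_iff_eq_0[OF linear_coord_restrict V(1)] by blast
  have "y (fst k) (snd k) = 0" if "k \<in> K" for k
    using fun_cong[OF fun_cong[OF y(3), of "fst k"], of "snd k"] that
    by (simp add: coord_restrict_def)
  with y show ?thesis
    using that by blast
qed

definition peaks_on :: "(nat \<Rightarrow> nat \<Rightarrow> real) \<Rightarrow> (nat \<times> nat) set \<Rightarrow> bool" where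
  "peaks_on x K \<longleftrightarrow> (\<forall>k. \<bar>x (fst k) (snd k)\<bar> \<le> 1) \<and> (\<forall>k\<in>K. \<bar>x (fst k) (snd k)\<bar> = 1)"

text \<open>The parameter \<open>e\<close> is the first time one of the finitely many lines \<open>e \<mapsto> X k + e * Y k\<close>
  reaches modulus \<open>1\<close>: the infimum of a closed set of such times, hence attained.\<close>
lemma first_exit_parameter:
  fixes X Y :: "'a \<Rightarrow> real"
  assumes F: "finite F" and X: "\<And>k. k \<in> F \<Longrightarrow> \<bar>X k\<bar> \<le> 1"
    and exit: "k1 \<in> F" "0 \<le> E" "1 \<le> \<bar>X k1 + E * Y k1\<bar>"
  obtains e k0 where "0 \<le> e" "e \<le> E" "k0 \<in> F" "\<bar>X k0 + e * Y k0\<bar> = 1"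
    "\<And>k. k \<in> F \<Longrightarrow> \<bar>X k + e * Y k\<bar> \<le> 1"
proof -
  define H where "H = (\<Union>k\<in>F. {0..E} \<inter> {e. 1 \<le> \<bar>X k + e * Y k\<bar>})"
  have "closed H"
    unfolding H_def
    by (intro closed_UN F ballI closed_Int closed_atLeastAtMost closed_Collect_le)
      (auto intro!: continuous_intros)
  moreover have "E \<in> H" "bdd_below H"
    using exit unfolding H_def by (auto intro: bdd_belowI[of _ 0])
  ultimately have "Inf H \<in> H"
    by (intro closed_contains_Inf) auto
  then obtain k0 where k0: "k0 \<in> F" "0 \<le> Inf H" "1 \<le> \<bar>X k0 + Inf H * Y k0\<bar>"
    unfolding H_def by auto
  have below: "\<bar>X k + Inf H * Y k\<bar> \<le> 1" if k: "k \<in> F" for k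
  proof (rule ccontr)
    assume "\<not> ?thesis"
    moreover have "continuous_on {0..Inf H} (\<lambda>t. \<bar>X k + t * Y k\<bar>)"
      by (intro continuous_intros)
    ultimately obtain t where t: "0 \<le> t" "t \<le> Inf H" "\<bar>X k + t * Y k\<bar> = 1"
      using IVT'[of "\<lambda>t. \<bar>X k + t * Y k\<bar>" 0 1 "Inf H"] X[OF k] k0(2) by auto
    then have "t \<in> H"
      using k \<open>Inf H \<in> H\<close> unfolding H_def by (auto intro!: bexI[of _ k])
    then have "Inf H \<le> t"
      using \<open>bdd_below H\<close> by (rule cInf_lower)
    with t \<open>\<not> ?thesis\<close> show False
      by simp
  qed
  show ?thesis
    using that[OF k0(2) _ k0(1) _ below] k0(3) below[OF k0(1)] \<open>Inf H \<in> H\<close>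
    by (auto simp: H_def)
qed

lemma finite_level_set_add_cmult:
  fixes x y :: "'a \<Rightarrow> real"
  assumes x: "\<And>d. 0 < d \<Longrightarrow> finite {k. d \<le> \<bar>x k\<bar>}"
    and y: "\<And>d. 0 < d \<Longrightarrow> finite {k. d \<le> \<bar>y k\<bar>}" and d: "0 < d"
  shows "finite {k. d \<le> \<bar>x k\<bar> + \<bar>c * y k\<bar>}"
proof (cases "c = 0")
  case True
  then show ?thesis
    using x[OF d] by simp
next
  case False
  have "{k. d \<le> \<bar>x k\<bar> + \<bar>c * y k\<bar>} \<subseteq> {k. d / 2 \<le> \<bar>x k\<bar>} \<union> {k. d / (2 * \<bar>c\<bar>) \<le> \<bar>y k\<bar>}"
    using False by (auto simp: abs_mult field_simps)
  moreover have "finite ({k. d / 2 \<le> \<bar>x k\<bar>} \<union> {k. d / (2 * \<bar>c\<bar>) \<le> \<bar>y k\<bar>})"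
    using d False by (intro finite_UnI x y) auto
  ultimately show ?thesis
    by (rule finite_subset)
qed

text \<open>Along \<open>x + e y\<close> with \<open>y\<close> vanishing on \<open>K\<close> the pinned entries stay fixed, and only
  finitely many other entries can reach modulus \<open>1\<close> for \<open>e \<in> [0, E]\<close>.\<close>
lemma peaks_on_insert_along:
  assumes x: "peaks_on x K" "\<And>d. 0 < d \<Longrightarrow> finite {k. d \<le> \<bar>x (fst k) (snd k)\<bar>}"
    and y: "\<And>k. k \<in> K \<Longrightarrow> y (fst k) (snd k) = 0"
      "\<And>d. 0 < d \<Longrightarrow> finite {k. d \<le> \<bar>y (fst k) (snd k)\<bar>}"
    and k1: "y (fst k1) (snd k1) \<noteq> 0"
  obtains e k0 where "k0 \<notin> K" "peaks_on (x + scl e y) (insert k0 K)"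
proof -
  define X where "X k = x (fst k) (snd k)" for k
  define Y where "Y k = y (fst k) (snd k)" for k
  define E where "E = 2 / \<bar>Y k1\<bar>"
  have E: "0 < E" "E * \<bar>Y k1\<bar> = 2"
    using k1 by (simp_all add: E_def Y_def)
  have X_le1: "\<bar>X k\<bar> \<le> 1" for k
    using x(1) by (simp add: peaks_on_def X_def)
  define F where "F = {k. k \<notin> K \<and> 1 \<le> \<bar>X k\<bar> + \<bar>E * Y k\<bar>}"
  have "finite {k. 1 \<le> \<bar>X k\<bar> + \<bar>E * Y k\<bar>}"
    using finite_level_set_add_cmult[OF x(2) y(2) zero_less_one, of E] by (simp add: X_def Y_def)
  then have F_fin: "finite F"
    by (rule finite_subset[rotated]) (auto simp: F_def)
  have "k1 \<notin> K"
    using y(1) k1 by auto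
  then have k1_F: "k1 \<in> F"
    using E X_le1[of k1] by (simp add: F_def abs_mult)
  have k1_exit: "1 \<le> \<bar>X k1 + E * Y k1\<bar>"
    using E X_le1[of k1] abs_triangle_ineq3[of "E * Y k1" "- X k1"] by (simp add: abs_mult)
  obtain e k0 where e: "0 \<le> e" "e \<le> E" "k0 \<in> F" "\<bar>X k0 + e * Y k0\<bar> = 1"
    and e_F: "\<And>k. k \<in> F \<Longrightarrow> \<bar>X k + e * Y k\<bar> \<le> 1"
    by (rule first_exit_parameter[of F X k1 E Y, OF F_fin _ k1_F _ k1_exit]) (use X_le1 E(1) in auto)
  have off_F: "\<bar>X k + e * Y k\<bar> \<le> 1" if "k \<notin> F" "k \<notin> K" for k
  proof -
    have "\<bar>X k + e * Y k\<bar> \<le> \<bar>X k\<bar> + E * \<bar>Y k\<bar>"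
      using e(1,2) abs_triangle_ineq[of "X k" "e * Y k"] mult_right_mono[OF e(2), of "\<bar>Y k\<bar>"]
      by (simp add: abs_mult)
    also have "\<dots> < 1"
      using that E(1) by (simp add: F_def abs_mult)
    finally show ?thesis
      by simp
  qed
  have on_K: "Y k = 0" "\<bar>X k\<bar> = 1" if "k \<in> K" for k
    using that y(1) x(1) by (simp_all add: Y_def X_def peaks_on_def)
  have "k0 \<notin> K"
    using e(3) by (simp add: F_def)
  moreover have "peaks_on (x + scl e y) (insert k0 K)"
    unfolding peaks_on_def
  proof (intro conjI allI ballI)
    fix k
    show "\<bar>(x + scl e y) (fst k) (snd k)\<bar> \<le> 1"
      using e_F off_F on_K by (cases "k \<in> F"; cases "k \<in> K") (auto simp: scl_def X_def Y_def)
  next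
    fix k
    assume "k \<in> insert k0 K"
    then show "\<bar>(x + scl e y) (fst k) (snd k)\<bar> = 1"
      using e(4) by (auto simp: on_K scl_def X_def[symmetric] Y_def[symmetric])
  qed
  ultimately show ?thesis
    by (rule that)
qed

lemma peaks_on_insert:
  fixes p0 q0 :: real
  assumes p: "0 < p0" and q: "0 < q0"
    and V: "scl.subspace V" "V \<subseteq> Collect (in_mixed (ereal q0) (ereal p0))" "scl.dim V = n"
    and x: "x \<in> V" "peaks_on x K" and K: "finite K" "card K < n"
  obtains x' k0 where "x' \<in> V" "k0 \<notin> K" "peaks_on x' (insert k0 K)"
proof -
  obtain y where y: "y \<in> V" "y \<noteq> 0" "\<And>k. k \<in> K \<Longrightarrow> y (fst k) (snd k) = 0"
    using subspace_has_nonzero_vanishing_on[OF V(1,3) K] by blast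
  obtain k1 where k1: "y (fst k1) (snd k1) \<noteq> 0"
    using y(2) by (metis ext fst_conv snd_conv zero_fun_apply)
  have x_in: "in_mixed (ereal q0) (ereal p0) x" and y_in: "in_mixed (ereal q0) (ereal p0) y"
    using V(2) x(1) y(1) by auto
  obtain e k0 where "k0 \<notin> K" "peaks_on (x + scl e y) (insert k0 K)"
    by (rule peaks_on_insert_along[of x K y k1, OF x(2) finite_mixed_level_set[OF p q x_in] y(3)
          finite_mixed_level_set[OF p q y_in] k1])
  moreover have "x + scl e y \<in> V"
    using V(1) x(1) y(1) by (simp add: scl.subspace_def)
  ultimately show ?thesis
    by (intro that)
qed

lemma exists_peaking_vector:
  fixes p0 q0 :: real
  assumes p: "0 < p0" and q: "0 < q0"
    and V: "scl.subspace V" "V \<subseteq> Collect (in_mixed (ereal q0) (ereal p0))" "scl.dim V = n"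
  shows "r \<le> n \<Longrightarrow> \<exists>x\<in>V. \<exists>K. finite K \<and> card K = r \<and> peaks_on x K"
proof (induction r)
  case 0
  have "0 \<in> V"
    using V(1) by (simp add: scl.subspace_def)
  then show ?case
    by (intro bexI[of _ 0] exI[of _ "{}"]) (simp add: peaks_on_def)
next
  case (Suc r)
  then obtain x K where x: "x \<in> V" "peaks_on x K" and K: "finite K" "card K = r"
    by auto
  with Suc.prems have "card K < n"
    by simp
  then obtain x' k0 where "x' \<in> V" "k0 \<notin> K" "peaks_on x' (insert k0 K)"
    by (rule peaks_on_insert[OF p q V x K(1)])
  with K show ?case
    by (intro bexI[of _ x'] exI[of _ "insert k0 K"]) auto
qed

lemma subspace_has_flat_unit_vector:
  fixes p0 q0 :: real
  assumes p: "0 < p0" and q: "0 < q0"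
    and V: "scl.subspace V" "V \<subseteq> Collect (in_mixed (ereal q0) (ereal p0))" "scl.dim V = n"
    and n: "1 \<le> n"
  obtains z where "z \<in> V" "mixed_norm (ereal q0) (ereal p0) z = 1"
    "\<And>j i. \<bar>z j i\<bar> \<le> real n powr - min (1 / p0) (1 / q0)"
proof -
  obtain x K where x: "x \<in> V" "peaks_on x K" and K: "finite K" "card K = n"
    using exists_peaking_vector[OF p q V order_refl] by blast
  have x_in: "in_mixed (ereal q0) (ereal p0) x"
    using V(2) x(1) by blast
  have x_le1: "\<bar>x j i\<bar> \<le> 1" for j i
    using x(2) unfolding peaks_on_def by (metis fst_conv snd_conv)
  define N where "N = mixed_norm (ereal q0) (ereal p0) x"
  have N_ge: "real n powr min (1 / p0) (1 / q0) \<le> N"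
    unfolding N_def using x(2) by (intro mixed_norm_ge_card_powr[OF p q x_in K n]) (simp add: peaks_on_def)
  moreover have "0 < real n powr min (1 / p0) (1 / q0)"
    using n by simp
  ultimately have N: "0 < N"
    by linarith
  define z where "z = scl (1 / N) x"
  have "z \<in> V"
    using V(1) x(1) by (simp add: z_def scl.subspace_def)
  moreover have "mixed_norm (ereal q0) (ereal p0) z = 1"
    using mixed_norm_scl[OF p q x_in, of "1 / N"] N by (simp add: z_def N_def)
  moreover have "\<bar>z j i\<bar> \<le> real n powr - min (1 / p0) (1 / q0)" for j i
  proof -
    have "\<bar>z j i\<bar> \<le> 1 / N"
      using x_le1[of j i] N by (simp add: z_def scl_def abs_mult divide_right_mono)
    also have "\<dots> \<le> real n powr - min (1 / p0) (1 / q0)"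
      using N_ge n by (simp add: powr_minus_divide frac_le)
    finally show ?thesis .
  qed
  ultimately show ?thesis
    by (rule that)
qed

lemma Inf_unit_sphere_mixed_norm_le:
  fixes p0 q0 :: real and p1 q1 :: ereal
  assumes p: "0 < p0" "ereal p0 < p1" and q: "0 < q0" "ereal q0 < q1"
    and V: "scl.subspace V" "V \<subseteq> Collect (in_mixed (ereal q0) (ereal p0))" "scl.dim V = n"
    and n: "1 \<le> n"
  shows "(INF x \<in> {x \<in> V. mixed_norm (ereal q0) (ereal p0) x = 1}. ereal (mixed_norm q1 p1 (id x)))
    \<le> ereal (real n powr (- (min (1 / p0) (1 / q0)
          * (1 - max (real_of_ereal (ereal q0 / q1)) (real_of_ereal (ereal p0 / p1))))))"
proof -
  define \<theta> where "\<theta> = max (real_of_ereal (ereal q0 / q1)) (real_of_ereal (ereal p0 / p1))"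
  define m where "m = min (1 / p0) (1 / q0)"
  have \<theta>: "0 \<le> \<theta>" "\<theta> < 1"
    using real_of_ereal_div_bounds[OF p] real_of_ereal_div_bounds[OF q] by (auto simp: \<theta>_def)
  obtain z where z: "z \<in> V" "mixed_norm (ereal q0) (ereal p0) z = 1"
    and z_le: "\<And>j i. \<bar>z j i\<bar> \<le> real n powr - m"
    using subspace_has_flat_unit_vector[OF p(1) q(1) V n] unfolding m_def by blast
  have "mixed_norm q1 p1 z \<le> (real n powr - m) powr (1 - \<theta>)"
    using z V(2) \<theta> z_le
    by (intro conjunct2[OF mixed_norm_le_interpolation[OF p q]]) (auto simp: \<theta>_def)
  also have "\<dots> = real n powr (- (m * (1 - \<theta>)))"
    by (simp add: powr_powr)
  finally have "ereal (mixed_norm q1 p1 (id z)) \<le> ereal (real n powr (- (m * (1 - \<theta>))))"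
    by simp
  moreover have "(INF x \<in> {x \<in> V. mixed_norm (ereal q0) (ereal p0) x = 1}.
      ereal (mixed_norm q1 p1 (id x))) \<le> ereal (mixed_norm q1 p1 (id z))"
    using z by (intro INF_lower) simp
  ultimately show ?thesis
    unfolding m_def \<theta>_def by order
qed

text \<open>Some \<open>n\<close>-dimensional subspace exists, so the supremum in \<open>bernstein\<close> is not
  over the empty set (where it would be \<open>-\<infinity>\<close>).\<close>
definition first_block_space :: "nat \<Rightarrow> (nat \<Rightarrow> nat \<Rightarrow> real) set" where
  "first_block_space n = {x. \<forall>j i. (j \<noteq> 0 \<or> n \<le> i) \<longrightarrow> x j i = 0}"

lemma subspace_first_block_space: "scl.subspace (first_block_space n)"
  by (auto simp: scl.subspace_def first_block_space_def scl_def)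

lemma first_block_space_in_mixed:
  assumes "x \<in> first_block_space n"
  shows "in_mixed (ereal q) (ereal p) x"
proof -
  have zero: "x j i = 0" if "j \<noteq> 0 \<or> n \<le> i" for j i
    using assms that by (auto simp: first_block_space_def)
  have "summable (\<lambda>i. \<bar>x j i\<bar> powr p)" for j
    by (rule summable_finite[of "{..<n}"]) (auto simp: zero)
  moreover have "lp_norm (ereal p) (x j) = 0" if "j \<noteq> 0" for j
    using that by (simp add: lp_norm_real zero)
  then have "summable (\<lambda>j. lp_norm (ereal p) (x j) powr q)"
    by (intro summable_finite[of "{0}"]) auto
  ultimately show ?thesis
    by (simp add: in_mixed_real_iff)
qed

lemma dim_first_block_space: "scl.dim (first_block_space n) = n"
proof -
  define K where "K = (\<lambda>i. (0::nat, i)) ` {..<n}"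
  have K: "finite K" "card K = n"
    unfolding K_def by (simp_all add: card_image inj_on_def)
  show ?thesis
  proof (rule scl.dim_unique[of "coord_unit ` K"])
    show "coord_unit ` K \<subseteq> first_block_space n"
      by (auto simp: K_def first_block_space_def coord_unit_def)
    show "first_block_space n \<subseteq> scl.span (coord_unit ` K)"
    proof
      fix x
      assume "x \<in> first_block_space n"
      then have "coord_restrict K x j i = x j i" for j i
        by (cases "j = 0 \<and> i < n") (auto simp: coord_restrict_def K_def first_block_space_def)
      then have "coord_restrict K x = x"
        by (simp add: fun_eq_iff)
      then show "x \<in> scl.span (coord_unit ` K)"
        using coord_restrict_in_span[OF K(1), of x] by simp
    qed
    show "scl.independent (coord_unit ` K)"
      by (rule coord_unit_independent)
    show "card (coord_unit ` K) = n"
      using K inj_coord_unit by (simp add: card_image inj_on_subset)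
  qed
qed

lemma bernstein_nonneg:
  fixes p0 q0 :: real and p1 q1 :: ereal
  assumes p: "0 < p0" "ereal p0 < p1" and q: "0 < q0" "ereal q0 < q1"
  shows "0 \<le> bernstein (in_mixed (ereal q0) (ereal p0)) (mixed_norm (ereal q0) (ereal p0))
                     (mixed_norm q1 p1) id n"
proof -
  have "max (real_of_ereal (ereal q0 / q1)) (real_of_ereal (ereal p0 / p1)) \<le> 1"
    using real_of_ereal_div_bounds[OF p] real_of_ereal_div_bounds[OF q] by simp
  note interpolation = mixed_norm_le_interpolation[OF p q max.cobounded2 max.cobounded1 this]
  have "0 \<le> ereal (mixed_norm q1 p1 (id x))"
    if x: "x \<in> first_block_space n" "mixed_norm (ereal q0) (ereal p0) x = 1" for x
  proof -
    have x_in: "in_mixed (ereal q0) (ereal p0) x"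
      using x(1) by (rule first_block_space_in_mixed)
    have "\<bar>x j i\<bar> \<le> 1" for j i
      using abs_le_mixed_norm[OF p(1) q(1) x_in] x(2) by simp
    then show ?thesis
      using interpolation[OF x_in x(2), of 1] by simp
  qed
  then have "0 \<le> (INF x \<in> {x \<in> first_block_space n. mixed_norm (ereal q0) (ereal p0) x = 1}.
      ereal (mixed_norm q1 p1 (id x)))"
    by (intro INF_greatest) auto
  also have "\<dots> \<le> bernstein (in_mixed (ereal q0) (ereal p0)) (mixed_norm (ereal q0) (ereal p0))
                     (mixed_norm q1 p1) id n"
    unfolding bernstein_def
    using subspace_first_block_space dim_first_block_space first_block_space_in_mixed
    by (intro SUP_upper) auto
  finally show ?thesis .
qed

lemma bernstein_mixed_embedding_le:
  fixes p0 q0 :: real and p1 q1 :: ereal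
  assumes p: "0 < p0" "ereal p0 < p1" and q: "0 < q0" "ereal q0 < q1" and n: "1 \<le> n"
  shows "bernstein (in_mixed (ereal q0) (ereal p0)) (mixed_norm (ereal q0) (ereal p0))
                     (mixed_norm q1 p1) id n
           \<le> ereal (real n powr (- (min (1 / p0) (1 / q0)
                 * (1 - max (real_of_ereal (ereal q0 / q1)) (real_of_ereal (ereal p0 / p1))))))"
  unfolding bernstein_def
  using Inf_unit_sphere_mixed_norm_le[OF p q _ _ _ n] by (intro SUP_least) auto

theorem proposition3p5:
  fixes p0 q0 :: real and p1 q1 :: ereal
  assumes "0 < p0" "ereal p0 < p1" "0 < q0" "ereal q0 < q1"
  shows "(\<forall>n::nat. n \<ge> 1 \<longrightarrow>
           bernstein (in_mixed (ereal q0) (ereal p0)) (mixed_norm (ereal q0) (ereal p0))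
                     (mixed_norm q1 p1) id n
           \<le> ereal (real n powr (- (min (1 / p0) (1 / q0)
                 * (1 - max (real_of_ereal (ereal q0 / q1)) (real_of_ereal (ereal p0 / p1)))))))
       \<and> (\<lambda>n. bernstein (in_mixed (ereal q0) (ereal p0)) (mixed_norm (ereal q0) (ereal p0))
                     (mixed_norm q1 p1) id n) \<longlonglongrightarrow> 0"
proof -
  define \<alpha> where "\<alpha> = min (1 / p0) (1 / q0)
                 * (1 - max (real_of_ereal (ereal q0 / q1)) (real_of_ereal (ereal p0 / p1)))"
  define b where "b = (\<lambda>n. bernstein (in_mixed (ereal q0) (ereal p0)) (mixed_norm (ereal q0) (ereal p0))
                     (mixed_norm q1 p1) id n)"
  have upper: "\<forall>n::nat. n \<ge> 1 \<longrightarrow> b n \<le> ereal (real n powr - \<alpha>)"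
    using bernstein_mixed_embedding_le[OF assms] unfolding b_def \<alpha>_def by blast
  have "0 < \<alpha>"
    using real_of_ereal_div_bounds[OF assms(1,2)] real_of_ereal_div_bounds[OF assms(3,4)] assms(1,3)
    by (simp add: \<alpha>_def)
  then have lim: "(\<lambda>n. ereal (real n powr - \<alpha>)) \<longlonglongrightarrow> 0"
    unfolding zero_ereal_def
    by (intro tendsto_ereal tendsto_neg_powr filterlim_real_sequentially) simp
  have nonneg: "eventually (\<lambda>n. 0 \<le> b n) sequentially"
    using bernstein_nonneg[OF assms] unfolding b_def by simp
  have below: "eventually (\<lambda>n. b n \<le> ereal (real n powr - \<alpha>)) sequentially"
    unfolding eventually_sequentially using upper by blast
  have "b \<longlonglongrightarrow> 0"
    by (rule tendsto_sandwich[OF nonneg below tendsto_const lim])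
  with upper show ?thesis
    unfolding b_def \<alpha>_def by blast
qed

end
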